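(* Let $n \ge 2$ and let $A \in \mathsf{M}_n(\mathbb{C})$ be convexoid. Then for every $k \in \{1,\ldots,n\}$, the field of values $F(A_{(k)})$ is inscribed in the polygon $\partial F(A)$; that is, $F(A_{(k)})$ has nonempty intersection with every side $\operatorname{co}(\lambda_j,\lambda_{j+1})$, $j = 1,\ldots,d$, of the polygon $\partial F(A)$ (notation as in the context).
   Context: For $B \in \mathsf{M}_m(\mathbb{C})$, the field of values (numerical range) is $F(B) = \{x^\ast B x : x \in \mathbb{C}^m,\ x^\ast x = 1\}$. $A_{(k)}$ denotes the $(n-1)$-by-$(n-1)$ principal submatrix of $A$ obtained by deleting the $k$th row and $k$th column. $\operatorname{co}(S)$ denotes the convex hull of a set $S \subset \mathbb{C}$, and $\sigma(A)$ the spectrum of $A$. $A$ is called convexoid if $F(A) = \operatorname{co}(\sigma(A))$. In that case $F(A)$ is the convex polygon $\operatorname{co}(\lambda_1,\ldots,\lambda_n)$, where $\lambda_1,\ldots,\lambda_n$ are the eigenvalues of $A$; label them so that $\lambda_1,\ldots,\lambda_d$ ($1 \le d \le n$) are the vertices of this polygon, listed consecutively along its boundary, so that $\partial F(A) = \bigcup_{j=1}^d \operatorname{co}(\lambda_j,\lambda_{j+1})$ with the convention $\lambda_{d+1} := \lambda_1$. A set $G$ is said to be inscribed in $F(A)$ if $G \cap \operatorname{co}(\lambda_j,\lambda_{j+1}) \neq \emptyset$ for all $j \in \{1,\ldots,d\}$. *)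

theory Defs
  imports "HOL-Analysis.Analysis"
begin

text \<open>Square matrices of size n are represented as functions nat => nat => complex,
  only entries with indices < n being relevant (0-based indices).
  Vectors are functions nat => complex, only entries < n relevant.\<close>

definition field_of_values :: "nat \<Rightarrow> (nat \<Rightarrow> nat \<Rightarrow> complex) \<Rightarrow> complex set" where
  "field_of_values n B =
     {(\<Sum>i<n. \<Sum>j<n. cnj (x i) * B i j * x j) | x :: nat \<Rightarrow> complex.
        (\<Sum>i<n. cnj (x i) * x i) = 1}"

definition spectrum_mat :: "nat \<Rightarrow> (nat \<Rightarrow> nat \<Rightarrow> complex) \<Rightarrow> complex set" where
  "spectrum_mat n B =
     {c. \<exists>x :: nat \<Rightarrow> complex. (\<exists>i<n. x i \<noteq> 0) \<and>
            (\<forall>i<n. (\<Sum>j<n. B i j * x j) = c * x i)}"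

text \<open>Principal submatrix obtained by deleting the k-th row and column (0-based k);
  it is an (n-1)-by-(n-1) matrix.\<close>
definition del_principal :: "nat \<Rightarrow> (nat \<Rightarrow> nat \<Rightarrow> complex) \<Rightarrow> nat \<Rightarrow> nat \<Rightarrow> complex" where
  "del_principal k B i j = B (if i < k then i else Suc i) (if j < k then j else Suc j)"

definition convexoid :: "nat \<Rightarrow> (nat \<Rightarrow> nat \<Rightarrow> complex) \<Rightarrow> bool" where
  "convexoid n B \<longleftrightarrow> field_of_values n B = convex hull (spectrum_mat n B)"

text \<open>A labelling of the vertices of the polygon P = co(spectrum) listed consecutively
  along its boundary: a duplicate-free list of exactly the vertices (extreme points)
  such that each side co(v_j, v_{j+1}) (indices mod d) lies on the boundary of P.\<close>
definition consecutive_vertices :: "complex set \<Rightarrow> complex list \<Rightarrow> bool" where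
  "consecutive_vertices P vs \<longleftrightarrow>
     distinct vs \<and> set vs = {v. v extreme_point_of P} \<and>
     (\<forall>j < length vs. closed_segment (vs ! j) (vs ! (Suc j mod length vs)) \<subseteq> frontier P)"

definition inscribed_in :: "complex set \<Rightarrow> complex list \<Rightarrow> bool" where
  "inscribed_in G vs \<longleftrightarrow>
     (\<forall>j < length vs. G \<inter> closed_segment (vs ! j) (vs ! (Suc j mod length vs)) \<noteq> {})"

end

theory Submission
  imports Defs "Jordan_Normal_Form.Char_Poly"
begin

text \<open>Let \<open>[p, q]\<close> be a side of the polygon \<open>F(A)\<close> with \<open>p \<noteq> q\<close>, supported by the line
  \<open>Re (conj a z) = c\<close>. Then the Hermitian form \<open>x \<mapsto> Re (x\<^sup>* (c I - conj a A) x)\<close> is positive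
  semidefinite, and unit vectors \<open>u, w\<close> with \<open>u\<^sup>* A u = p\<close>, \<open>w\<^sup>* A w = q\<close> lie in its null space,
  which is a linear subspace. The combination \<open>w\<^sub>k u - u\<^sub>k w\<close> is a nonzero null vector whose
  \<open>k\<close>-th entry vanishes, so after normalisation it yields a point of \<open>F(A\<^sub>(\<^sub>k\<^sub>))\<close> on the
  supporting line; as \<open>p\<close> and \<open>q\<close> are extreme points, that point lies on \<open>[p, q]\<close>.
  Convexoidness is only needed to know that \<open>F(A)\<close> is compact and convex.\<close>

lemma finite_spectrum_mat: "finite (spectrum_mat n A)"
proof -
  define M where "M = Matrix.mat n n (\<lambda>(i,j). A i j)"
  have M: "M \<in> carrier_mat n n" unfolding M_def by auto
  have "spectrum_mat n A \<subseteq> {c. poly (char_poly M) c = 0}"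
  proof
    fix c assume "c \<in> spectrum_mat n A"
    then obtain x where x: "\<exists>i<n. x i \<noteq> 0" "\<forall>i<n. (\<Sum>j<n. A i j * x j) = c * x i"
      unfolding spectrum_mat_def by auto
    define v where "v = Matrix.vec n x"
    have "eigenvector M v c" unfolding eigenvector_def
    proof (intro conjI)
      show "v \<in> carrier_vec (dim_row M)" using M v_def by auto
      show "v \<noteq> 0\<^sub>v (dim_row M)" using x(1) M unfolding v_def
        by (metis carrier_matD(1) index_vec index_zero_vec(1))
      show "M *\<^sub>v v = c \<cdot>\<^sub>v v"
      proof (rule eq_vecI)
        fix i assume "i < dim_vec (c \<cdot>\<^sub>v v)"
        then have i: "i < n" unfolding v_def by simp
        have "(M *\<^sub>v v) $ i = (\<Sum>j<n. A i j * x j)"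
          using i unfolding M_def v_def scalar_prod_def
          by (auto intro!: sum.cong simp: lessThan_atLeast0 scalar_prod_def)
        then show "(M *\<^sub>v v) $ i = (c \<cdot>\<^sub>v v) $ i" using x(2) i unfolding v_def by simp
      qed (simp add: M_def v_def)
    qed
    then show "c \<in> {c. poly (char_poly M) c = 0}"
      using eigenvalue_root_char_poly[OF M] unfolding eigenvalue_def by auto
  qed
  moreover have "char_poly M \<noteq> 0" using degree_monic_char_poly[OF M] by auto
  then have "finite {c. poly (char_poly M) c = 0}" by (rule poly_roots_finite)
  ultimately show ?thesis using finite_subset by auto
qed

lemma collinear_extreme_points_imp_closed_segment:
  fixes p q z :: "'a::euclidean_space"
  assumes p: "p extreme_point_of S" and q: "q extreme_point_of S" and "p \<noteq> q"
    and "z \<in> S" and "collinear {p, q, z}"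
  shows "z \<in> closed_segment p q"
proof -
  have "p \<notin> open_segment q z" "q \<notin> open_segment p z"
    using p q \<open>z \<in> S\<close> unfolding extreme_point_of_def by auto
  then show ?thesis
    using \<open>collinear {p, q, z}\<close> \<open>p \<noteq> q\<close>
    unfolding collinear_between_cases between_mem_segment open_segment_def
    by (auto simp: closed_segment_commute)
qed

lemma collinear_hyperplane:
  fixes a :: "'a::euclidean_space"
  assumes "DIM('a) = 2" and "a \<noteq> 0"
  shows "collinear {x. a \<bullet> x = c}"
  using assms by (simp add: collinear_aff_dim)

lemma supporting_hyperplane_frontier:
  fixes m :: "'a::euclidean_space"
  assumes "convex S" and "m \<in> S" and "m \<in> frontier S"
  obtains a where "a \<noteq> 0" and "\<And>z. z \<in> S \<Longrightarrow> a \<bullet> z \<le> a \<bullet> m"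
proof (cases "interior S = {}")
  case True
  then obtain a b where "a \<noteq> 0" "S \<subseteq> {x. a \<bullet> x = b}"
    using empty_interior_subset_hyperplane[OF \<open>convex S\<close>] by metis
  then show ?thesis using \<open>m \<in> S\<close> by (intro that[of a]) (auto simp: subset_iff)
next
  case False
  then have "m \<notin> rel_interior S"
    using \<open>m \<in> frontier S\<close> rel_interior_nonempty_interior by (auto simp: frontier_def)
  then obtain a where "a \<noteq> 0" "\<And>z. z \<in> S \<Longrightarrow> a \<bullet> m \<le> a \<bullet> z"
    using supporting_hyperplane_rel_boundary[OF \<open>convex S\<close> \<open>m \<in> S\<close>] by metis
  then show ?thesis by (intro that[of "-a"]) auto
qed

lemma supporting_hyperplane_frontier_segment:
  fixes p q :: "'a::euclidean_space"
  assumes "convex S" and "p \<in> S" and "q \<in> S" and "closed_segment p q \<subseteq> frontier S"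
  obtains a where "a \<noteq> 0" and "a \<bullet> q = a \<bullet> p" and "\<And>z. z \<in> S \<Longrightarrow> a \<bullet> z \<le> a \<bullet> p"
proof -
  have "midpoint p q \<in> S"
    using assms(1-3) by (meson convex_contains_segment midpoint_in_closed_segment subsetD)
  moreover have "midpoint p q \<in> frontier S"
    using assms(4) midpoint_in_closed_segment by blast
  ultimately obtain a where "a \<noteq> 0" and sup: "\<And>z. z \<in> S \<Longrightarrow> a \<bullet> z \<le> a \<bullet> midpoint p q"
    using supporting_hyperplane_frontier[OF \<open>convex S\<close>] by metis
  have "a \<bullet> midpoint p q = (a \<bullet> p + a \<bullet> q) / 2"
    by (simp add: midpoint_def inner_add_right)
  then have "a \<bullet> q = a \<bullet> p" and "a \<bullet> midpoint p q = a \<bullet> p"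
    using sup[OF \<open>p \<in> S\<close>] sup[OF \<open>q \<in> S\<close>] by auto
  with \<open>a \<noteq> 0\<close> sup show ?thesis using that by metis
qed

definition quad_form :: "nat \<Rightarrow> (nat \<Rightarrow> nat \<Rightarrow> complex) \<Rightarrow> (nat \<Rightarrow> complex) \<Rightarrow> complex" where
  "quad_form n M x = (\<Sum>i<n. \<Sum>j<n. cnj (x i) * M i j * x j)"

definition sesq_form ::
    "nat \<Rightarrow> (nat \<Rightarrow> nat \<Rightarrow> complex) \<Rightarrow> (nat \<Rightarrow> complex) \<Rightarrow> (nat \<Rightarrow> complex) \<Rightarrow> complex" where
  "sesq_form n M x y = (\<Sum>i<n. \<Sum>j<n. cnj (x i) * M i j * y j)"

definition sq_norm :: "nat \<Rightarrow> (nat \<Rightarrow> complex) \<Rightarrow> real" where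
  "sq_norm n x = (\<Sum>i<n. (cmod (x i))\<^sup>2)"

lemma cnj_mult_self: "cnj r * r = of_real ((cmod r)\<^sup>2)"
  by (metis complex_norm_square mult.commute)

lemma sum_cnj_mult_self: "(\<Sum>i<n. cnj (x i) * x i) = of_real (sq_norm n x)"
  unfolding sq_norm_def of_real_sum by (simp add: cnj_mult_self)

lemma mem_field_of_values_iff:
  "z \<in> field_of_values n M \<longleftrightarrow> (\<exists>x. sq_norm n x = 1 \<and> quad_form n M x = z)"
  unfolding field_of_values_def quad_form_def sum_cnj_mult_self by auto

lemma sq_norm_nonneg: "0 \<le> sq_norm n x"
  unfolding sq_norm_def by (simp add: sum_nonneg)

lemma sq_norm_eq_0_iff: "sq_norm n x = 0 \<longleftrightarrow> (\<forall>i<n. x i = 0)"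
  unfolding sq_norm_def by (auto simp: sum_nonneg_eq_0_iff)

lemma sq_norm_scale: "sq_norm n (\<lambda>i. r * x i) = (cmod r)\<^sup>2 * sq_norm n x"
  unfolding sq_norm_def by (simp add: sum_distrib_left norm_mult power_mult_distrib)

lemma quad_form_scale: "quad_form n M (\<lambda>i. r * x i) = of_real ((cmod r)\<^sup>2) * quad_form n M x"
  unfolding quad_form_def cnj_mult_self[symmetric] by (simp add: sum_distrib_left algebra_simps)

lemma quad_form_add_real:
  "quad_form n M (\<lambda>i. x i + of_real t * y i) =
     quad_form n M x + of_real t * (sesq_form n M x y + sesq_form n M y x) + of_real t ^ 2 * quad_form n M y"
  unfolding quad_form_def sesq_form_def
  by (simp add: sum_distrib_left sum.distrib[symmetric] algebra_simps power2_eq_square)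

lemma quad_form_cong: "(\<And>i. i < n \<Longrightarrow> x i = y i) \<Longrightarrow> quad_form n M x = quad_form n M y"
  unfolding quad_form_def by (auto intro!: sum.cong)

lemma sq_norm_cong: "(\<And>i. i < n \<Longrightarrow> x i = y i) \<Longrightarrow> sq_norm n x = sq_norm n y"
  unfolding sq_norm_def by (auto intro!: sum.cong)

lemma exists_unit_rescaling:
  assumes "sq_norm n x \<noteq> 0"
  obtains r :: complex where "r \<noteq> 0" and "sq_norm n (\<lambda>i. r * x i) = 1"
proof
  have "0 < sq_norm n x" using assms sq_norm_nonneg[of n x] by linarith
  then show "sq_norm n (\<lambda>i. of_real (1 / sqrt (sq_norm n x)) * x i) = 1"
    unfolding sq_norm_scale norm_of_real by (simp add: power_divide)
qed (use assms in simp)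

lemma Re_quad_form_nonneg:
  assumes "\<And>x. sq_norm n x = 1 \<Longrightarrow> 0 \<le> Re (quad_form n M x)"
  shows "0 \<le> Re (quad_form n M x)"
proof (cases "sq_norm n x = 0")
  case True
  then have "quad_form n M x = quad_form n M (\<lambda>_. 0)"
    unfolding sq_norm_eq_0_iff by (intro quad_form_cong) auto
  then show ?thesis unfolding quad_form_def by simp
next
  case False
  then obtain r where "r \<noteq> 0" "sq_norm n (\<lambda>i. r * x i) = 1" by (rule exists_unit_rescaling)
  then have "0 \<le> (cmod r)\<^sup>2 * Re (quad_form n M x)"
    using assms[of "\<lambda>i. r * x i"] unfolding quad_form_scale by simp
  then show ?thesis using \<open>r \<noteq> 0\<close> by (simp add: zero_le_mult_iff)
qed

text \<open>The null vectors of a positive semidefinite form are absorbed by addition: otherwise the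
  real quadratic \<open>t \<mapsto> Re (quad_form n M (x + t y))\<close>, which vanishes at \<open>t = 0\<close>, would change sign.\<close>

lemma Re_quad_form_add_null:
  assumes nonneg: "\<And>x. 0 \<le> Re (quad_form n M x)" and null: "Re (quad_form n M x) = 0"
  shows "Re (quad_form n M (\<lambda>i. x i + y i)) = Re (quad_form n M y)"
proof -
  define L where "L = Re (sesq_form n M x y + sesq_form n M y x)"
  define Q where "Q = Re (quad_form n M y)"
  have "0 \<le> Q" using nonneg Q_def by auto
  have expand: "Re (quad_form n M (\<lambda>i. x i + of_real t * y i)) = t * L + t\<^sup>2 * Q" for t
    unfolding quad_form_add_real L_def Q_def using null by (simp add: power2_eq_square)
  define t where "t = - L / (Q + 1)"
  have "0 \<le> (Q + 1)\<^sup>2 * (t * L + t\<^sup>2 * Q)"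
    using expand[of t] nonneg by (metis zero_le_mult_iff zero_le_power2)
  also have "\<dots> = (Q + 1) * (t * (Q + 1)) * L + (t * (Q + 1))\<^sup>2 * Q"
    by (simp add: algebra_simps power2_eq_square)
  also have "t * (Q + 1) = - L" unfolding t_def using \<open>0 \<le> Q\<close> by simp
  finally have "L\<^sup>2 \<le> 0" by (simp add: algebra_simps power2_eq_square)
  then have "L = 0" by simp
  then show ?thesis using expand[of 1] unfolding Q_def by simp
qed

lemma quad_form_shift:
  "quad_form n (\<lambda>i j. (if i = j then c else 0) - b * A i j) x
     = c * of_real (sq_norm n x) - b * quad_form n A x"
proof -
  have row: "(\<Sum>j<n. cnj (x i) * ((if i = j then c else 0) - b * A i j) * x j)
      = c * (cnj (x i) * x i) - b * (\<Sum>j<n. cnj (x i) * A i j * x j)" if "i < n" for i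
  proof -
    have "(\<Sum>j<n. cnj (x i) * ((if i = j then c else 0) - b * A i j) * x j)
        = (\<Sum>j<n. if i = j then c * (cnj (x i) * x j) else 0) - (\<Sum>j<n. b * (cnj (x i) * A i j * x j))"
      unfolding sum_subtractf[symmetric] by (intro sum.cong refl) (auto simp: algebra_simps)
    then show ?thesis using that by (simp add: sum_distrib_left)
  qed
  show ?thesis
    unfolding quad_form_def sum_cnj_mult_self[symmetric]
    by (simp add: row sum_subtractf sum_distrib_left)
qed

definition skip_index :: "nat \<Rightarrow> nat \<Rightarrow> nat" where
  "skip_index k i = (if i < k then i else Suc i)"

lemma sum_skip_index:
  assumes "k < n"
  shows "(\<Sum>i<n. f i) = f k + (\<Sum>i<n - 1. f (skip_index k i))"
proof -
  have "inj_on (skip_index k) {..<n - 1}" unfolding skip_index_def inj_on_def by auto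
  moreover have "skip_index k ` {..<n - 1} = {..<n} - {k}"
  proof (intro equalityI subsetI)
    fix i assume i: "i \<in> {..<n} - {k}"
    show "i \<in> skip_index k ` {..<n - 1}"
    proof (cases "i < k")
      case True
      then show ?thesis using i assms unfolding skip_index_def by (intro image_eqI[of _ _ i]) auto
    next
      case False
      then show ?thesis using i unfolding skip_index_def by (intro image_eqI[of _ _ "i - 1"]) auto
    qed
  qed (use assms in \<open>auto simp: skip_index_def\<close>)
  ultimately have "(\<Sum>i\<in>{..<n} - {k}. f i) = (\<Sum>i<n - 1. f (skip_index k i))"
    by (metis sum.reindex_cong)
  then show ?thesis using assms by (simp add: sum.remove)
qed

lemma
  assumes "k < n" and "x k = 0"
  shows quad_form_del_principal:
      "quad_form n A x = quad_form (n - 1) (del_principal k A) (\<lambda>i. x (skip_index k i))"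
    and sq_norm_del_principal: "sq_norm n x = sq_norm (n - 1) (\<lambda>i. x (skip_index k i))"
proof -
  show "quad_form n A x = quad_form (n - 1) (del_principal k A) (\<lambda>i. x (skip_index k i))"
    unfolding quad_form_def sum_skip_index[OF assms(1), of "\<lambda>i. \<Sum>j<n. _ i j"]
    by (simp add: assms sum_skip_index[OF assms(1)] del_principal_def skip_index_def[symmetric])
  show "sq_norm n x = sq_norm (n - 1) (\<lambda>i. x (skip_index k i))"
    unfolding sq_norm_def by (simp add: assms sum_skip_index[OF assms(1)])
qed

lemma quad_form_mem_field_of_values_del_principal:
  assumes "k < n" and "x k = 0" and "sq_norm n x = 1"
  shows "quad_form n A x \<in> field_of_values (n - 1) (del_principal k A)"
  unfolding mem_field_of_values_iff
  using assms quad_form_del_principal[of k n x A] sq_norm_del_principal[of k n x] by auto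

lemma field_of_values_del_principal_subset:
  assumes "k < n"
  shows "field_of_values (n - 1) (del_principal k A) \<subseteq> field_of_values n A"
proof
  fix z assume "z \<in> field_of_values (n - 1) (del_principal k A)"
  then obtain y where y: "sq_norm (n - 1) y = 1" "quad_form (n - 1) (del_principal k A) y = z"
    unfolding mem_field_of_values_iff by blast
  define x where "x i = (if i < k then y i else if i = k then 0 else y (i - 1))" for i
  have "(\<lambda>i. x (skip_index k i)) = y" and "x k = 0"
    unfolding x_def skip_index_def by auto
  then have "sq_norm n x = 1" and "quad_form n A x = z"
    using assms y quad_form_del_principal[of k n x A] sq_norm_del_principal[of k n x] by auto
  then show "z \<in> field_of_values n A"
    unfolding mem_field_of_values_iff by blast
qed

lemma field_of_values_nonempty:
  assumes "n \<ge> 1"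
  shows "field_of_values n M \<noteq> {}"
proof -
  define e :: "nat \<Rightarrow> complex" where "e i = (if i = 0 then 1 else 0)" for i
  have "sq_norm n e = 1"
    using assms unfolding sq_norm_def e_def
    by (simp add: if_distrib[of cmod] if_distrib[of "\<lambda>x. x\<^sup>2"] cong: if_cong)
  then have "quad_form n M e \<in> field_of_values n M"
    unfolding mem_field_of_values_iff by blast
  then show ?thesis by blast
qed

lemma field_of_values_del_principal_meets_supporting_line:
  fixes a p q :: complex
  assumes "k < n"
    and sup: "\<And>z. z \<in> field_of_values n A \<Longrightarrow> a \<bullet> z \<le> c"
    and p: "p \<in> field_of_values n A" "a \<bullet> p = c"
    and q: "q \<in> field_of_values n A" "a \<bullet> q = c"
    and "p \<noteq> q"
  obtains z where "z \<in> field_of_values (n - 1) (del_principal k A)" and "a \<bullet> z = c"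
proof -
  define M where "M i j = (if i = j then of_real c else 0) - cnj a * A i j" for i j
  have Re_M: "Re (quad_form n M x) = c * sq_norm n x - a \<bullet> quad_form n A x" for x
    unfolding M_def quad_form_shift by (simp add: inner_complex_def)
  have nonneg: "0 \<le> Re (quad_form n M x)" for x
  proof (rule Re_quad_form_nonneg)
    fix y assume "sq_norm n y = 1"
    then show "0 \<le> Re (quad_form n M y)"
      using sup[of "quad_form n A y"] unfolding Re_M mem_field_of_values_iff by auto
  qed
  obtain u where u: "sq_norm n u = 1" "quad_form n A u = p"
    using p(1) unfolding mem_field_of_values_iff by blast
  obtain w where w: "sq_norm n w = 1" "quad_form n A w = q"
    using q(1) unfolding mem_field_of_values_iff by blast
  show ?thesis
  proof (cases "u k = 0")
    case True
    show ?thesis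
    proof (rule that)
      show "p \<in> field_of_values (n - 1) (del_principal k A)"
        using quad_form_mem_field_of_values_del_principal[OF \<open>k < n\<close> True u(1), of A] u(2) by simp
    qed (fact p(2))
  next
    case False
    define x where "x i = w k * u i + (- u k) * w i" for i
    have "Re (quad_form n M (\<lambda>i. w k * u i)) = 0"
      unfolding quad_form_scale using Re_M[of u] u p(2) by simp
    then have "Re (quad_form n M x) = Re (quad_form n M (\<lambda>i. (- u k) * w i))"
      unfolding x_def by (rule Re_quad_form_add_null[OF nonneg])
    then have null: "Re (quad_form n M x) = 0"
      unfolding quad_form_scale using Re_M[of w] w q(2) by simp
    have "sq_norm n x \<noteq> 0"
    proof
      assume "sq_norm n x = 0"
      define r where "r = w k / u k"
      have w_eq: "w i = r * u i" if "i < n" for i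
        using that False \<open>sq_norm n x = 0\<close> unfolding sq_norm_eq_0_iff x_def r_def
        by (auto simp: field_simps)
      have "sq_norm n w = (cmod r)\<^sup>2"
        using sq_norm_cong[of n w "\<lambda>i. r * u i"] w_eq u(1) by (simp add: sq_norm_scale)
      moreover have "q = of_real ((cmod r)\<^sup>2) * p"
        using quad_form_cong[of n w "\<lambda>i. r * u i" A] w_eq u(2) w(2) by (simp add: quad_form_scale)
      ultimately show False using w(1) \<open>p \<noteq> q\<close> by simp
    qed
    then obtain r where unit: "sq_norm n (\<lambda>i. r * x i) = 1"
      using exists_unit_rescaling by blast
    have "quad_form n A (\<lambda>i. r * x i) \<in> field_of_values (n - 1) (del_principal k A)"
      using quad_form_mem_field_of_values_del_principal[OF \<open>k < n\<close> _ unit] x_def by simp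
    moreover have "a \<bullet> quad_form n A (\<lambda>i. r * x i) = c"
      using Re_M[of "\<lambda>i. r * x i"] null unit unfolding quad_form_scale by simp
    ultimately show ?thesis by (rule that)
  qed
qed

lemma consecutive_vertices_degenerate_side:
  assumes "compact P" and "convex P" and cv: "consecutive_vertices P vs"
    and j: "j < length vs" and eq: "vs ! j = vs ! (Suc j mod length vs)"
  shows "P = {vs ! j}"
proof -
  have "distinct vs" and vertices: "set vs = {v. v extreme_point_of P}"
    using cv unfolding consecutive_vertices_def by auto
  moreover have "Suc j mod length vs < length vs" using j by (intro mod_less_divisor) linarith
  ultimately have j_eq: "j = Suc j mod length vs"
    using eq j nth_eq_iff_index_eq by blast
  have "length vs = 1"
  proof (cases "Suc j < length vs")
    case False
    then have "Suc j = length vs" using j by simp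
    moreover from this have "j = 0" using j_eq by (metis mod_self)
    ultimately show ?thesis by simp
  qed (use j_eq in simp)
  then have "set vs = {vs ! j}" using j by (cases vs) auto
  then show ?thesis
    using Krein_Milman_Minkowski[OF \<open>compact P\<close> \<open>convex P\<close>] vertices by simp
qed

lemma field_of_values_del_principal_meets_side:
  fixes n k :: nat and A :: "nat \<Rightarrow> nat \<Rightarrow> complex"
  defines "P \<equiv> field_of_values n A" and "G \<equiv> field_of_values (n - 1) (del_principal k A)"
  assumes "n \<ge> 2" and "k < n" and "compact P" and "convex P"
    and cv: "consecutive_vertices P vs" and j: "j < length vs"
  shows "G \<inter> closed_segment (vs ! j) (vs ! (Suc j mod length vs)) \<noteq> {}"
proof -
  define p q where "p = vs ! j" and "q = vs ! (Suc j mod length vs)"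
  have "Suc j mod length vs < length vs" using j by (intro mod_less_divisor) linarith
  then have "p \<in> set vs" and "q \<in> set vs"
    using j unfolding p_def q_def by simp_all
  then have p: "p extreme_point_of P" and q: "q extreme_point_of P"
    using cv unfolding consecutive_vertices_def by auto
  then have "p \<in> P" and "q \<in> P" by (auto simp: extreme_point_of_def)
  have "G \<subseteq> P"
    unfolding G_def P_def using field_of_values_del_principal_subset[OF \<open>k < n\<close>] .
  consider "p = q" | "p \<noteq> q" by blast
  then have "G \<inter> closed_segment p q \<noteq> {}"
  proof cases
    case 1
    then have "P = {p}"
      using consecutive_vertices_degenerate_side[OF \<open>compact P\<close> \<open>convex P\<close> cv j] p_def q_def by simp
    moreover have "G \<noteq> {}" unfolding G_def using \<open>n \<ge> 2\<close> by (simp add: field_of_values_nonempty)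
    ultimately show ?thesis using \<open>G \<subseteq> P\<close> by auto
  next
    case 2
    have "closed_segment p q \<subseteq> frontier P"
      using cv j unfolding consecutive_vertices_def p_def q_def by auto
    then obtain a where "a \<noteq> 0" and "a \<bullet> q = a \<bullet> p" and sup: "\<And>z. z \<in> P \<Longrightarrow> a \<bullet> z \<le> a \<bullet> p"
      using supporting_hyperplane_frontier_segment[OF \<open>convex P\<close> \<open>p \<in> P\<close> \<open>q \<in> P\<close>] by blast
    then obtain z where "z \<in> G" and "a \<bullet> z = a \<bullet> p"
      using field_of_values_del_principal_meets_supporting_line[OF \<open>k < n\<close> sup[unfolded P_def]
          \<open>p \<in> P\<close>[unfolded P_def] refl \<open>q \<in> P\<close>[unfolded P_def] \<open>a \<bullet> q = a \<bullet> p\<close> \<open>p \<noteq> q\<close>]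
      unfolding G_def by blast
    have "{p, q, z} \<subseteq> {x. a \<bullet> x = a \<bullet> p}"
      using \<open>a \<bullet> q = a \<bullet> p\<close> \<open>a \<bullet> z = a \<bullet> p\<close> by auto
    then have "collinear {p, q, z}"
      by (rule collinear_subset[OF collinear_hyperplane[OF DIM_complex \<open>a \<noteq> 0\<close>]])
    then have "z \<in> closed_segment p q"
      using collinear_extreme_points_imp_closed_segment[OF p q \<open>p \<noteq> q\<close>] \<open>z \<in> G\<close> \<open>G \<subseteq> P\<close> by blast
    with \<open>z \<in> G\<close> show ?thesis by blast
  qed
  then show ?thesis unfolding p_def q_def .
qed

theorem mainTheorem3:
  fixes n :: nat and A :: "nat \<Rightarrow> nat \<Rightarrow> complex" and vs :: "complex list"
  assumes "n \<ge> 2"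
    and "convexoid n A"
    and "consecutive_vertices (field_of_values n A) vs"
    and "k < n"
  shows "inscribed_in (field_of_values (n - 1) (del_principal k A)) vs"
proof -
  have "field_of_values n A = convex hull (spectrum_mat n A)"
    using \<open>convexoid n A\<close> unfolding convexoid_def .
  then have "compact (field_of_values n A)" and "convex (field_of_values n A)"
    using finite_spectrum_mat by (simp_all add: compact_convex_hull finite_imp_compact)
  then show ?thesis
    unfolding inscribed_in_def
    using field_of_values_del_principal_meets_side assms(1,3,4) by blast
qed

end
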